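(* Let $\mathcal{A}^0\subset\mathbb{R}^6\setminus\{0\}$ be the set of all $(a,b,c,d,e,f)\neq 0$ such that the Type $\mathcal{A}$ model $\mathcal{M}(a,b,c,d,e,f)$ is flat. Then $\mathcal{A}^0$ is a smooth submanifold of $\mathbb{R}^6\setminus\{0\}$ which is diffeomorphic to the total space of the vector bundle $\mathbb{L}\oplus\mathbb{1}\oplus\mathbb{1}$ over $S^1$ with its zero section removed, where $\mathbb{1}$ denotes the trivial real line bundle over $S^1$ and $\mathbb{L}$ the Möbius line bundle over $S^1$.
   Context: An affine surface is a smooth surface with a torsion free connection $\nabla$; in coordinates $\nabla_{\partial_{x^i}}\partial_{x^j}=\Gamma_{ij}{}^k\partial_{x^k}$. For $(a,b,c,d,e,f)\in\mathbb{R}^6$, the Type $\mathcal{A}$ model $\mathcal{M}(a,b,c,d,e,f)$ is $(\mathbb{R}^2,\nabla)$ with constant Christoffel symbols $\Gamma_{11}{}^1=a$, $\Gamma_{11}{}^2=b$, $\Gamma_{12}{}^1=\Gamma_{21}{}^1=c$, $\Gamma_{12}{}^2=\Gamma_{21}{}^2=d$, $\Gamma_{22}{}^1=e$, $\Gamma_{22}{}^2=f$; this identifies Type $\mathcal{A}$ geometries with $\mathbb{R}^6$. Its Ricci tensor is $\rho=\begin{pmatrix}(a-d)d+b(f-c) & cd-be\\ cd-be & c(f-c)+(a-d)e\end{pmatrix}$, and the model is flat iff $\rho=0$. *)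

theory Defs
  imports "HOL-Analysis.Analysis"
begin

definition ricci11 :: "real \<Rightarrow> real \<Rightarrow> real \<Rightarrow> real \<Rightarrow> real \<Rightarrow> real \<Rightarrow> real" where
  "ricci11 a b c d e f = (a - d) * d + b * (f - c)"
definition ricci12 :: "real \<Rightarrow> real \<Rightarrow> real \<Rightarrow> real \<Rightarrow> real \<Rightarrow> real \<Rightarrow> real" where
  "ricci12 a b c d e f = c * d - b * e"
definition ricci22 :: "real \<Rightarrow> real \<Rightarrow> real \<Rightarrow> real \<Rightarrow> real \<Rightarrow> real \<Rightarrow> real" where
  "ricci22 a b c d e f = c * (f - c) + (a - d) * e"

text \<open>The model is flat iff its Ricci tensor vanishes (the tensor is symmetric,
  so the (2,1) entry equals the (1,2) entry).\<close>
definition typeA_flat :: "real \<Rightarrow> real \<Rightarrow> real \<Rightarrow> real \<Rightarrow> real \<Rightarrow> real \<Rightarrow> bool" where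
  "typeA_flat a b c d e f \<longleftrightarrow>
     ricci11 a b c d e f = 0 \<and> ricci12 a b c d e f = 0 \<and> ricci22 a b c d e f = 0"

definition A0 :: "(real \<times> real \<times> real \<times> real \<times> real \<times> real) set" where
  "A0 = {(a, b, c, d, e, f). (a, b, c, d, e, f) \<noteq> 0 \<and> typeA_flat a b c d e f}"

fun Ck_on :: "nat \<Rightarrow> 'a::euclidean_space set \<Rightarrow> ('a \<Rightarrow> 'b::euclidean_space) \<Rightarrow> bool" where
  "Ck_on 0 U g = continuous_on U g"
| "Ck_on (Suc k) U g =
     ((\<forall>x\<in>U. g differentiable (at x)) \<and>
      (\<forall>i\<in>Basis. Ck_on k U (\<lambda>x. frechet_derivative g (at x) i)))"

definition smooth_on :: "'a::euclidean_space set \<Rightarrow> ('a \<Rightarrow> 'b::euclidean_space) \<Rightarrow> bool" where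
  "smooth_on U g \<longleftrightarrow> open U \<and> (\<forall>k. Ck_on k U g)"

definition smooth_map_on :: "'a::euclidean_space set \<Rightarrow> ('a \<Rightarrow> 'b::euclidean_space) \<Rightarrow> bool" where
  "smooth_map_on S f \<longleftrightarrow>
     (\<forall>p\<in>S. \<exists>U g. open U \<and> p \<in> U \<and> smooth_on U g \<and> (\<forall>x\<in>S \<inter> U. g x = f x))"

definition diffeomorphic_sets :: "'a::euclidean_space set \<Rightarrow> 'b::euclidean_space set \<Rightarrow> bool" where
  "diffeomorphic_sets S T \<longleftrightarrow>
     (\<exists>f g. f ` S \<subseteq> T \<and> g ` T \<subseteq> S \<and> (\<forall>x\<in>S. g (f x) = x) \<and> (\<forall>y\<in>T. f (g y) = y) \<and>
            smooth_map_on S f \<and> smooth_map_on T g)"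

definition smooth_submanifold :: "'a::euclidean_space set \<Rightarrow> bool" where
  "smooth_submanifold M \<longleftrightarrow>
     (\<forall>p\<in>M. \<exists>U V (\<phi>::'a \<Rightarrow> 'a) L.
        open U \<and> p \<in> U \<and> open V \<and> \<phi> ` U = V \<and> inj_on \<phi> U \<and>
        smooth_on U \<phi> \<and> smooth_on V (inv_into U \<phi>) \<and>
        subspace L \<and> \<phi> ` (U \<inter> M) = V \<inter> L)"

text \<open>S^1 is the unit circle in R^2. The Moebius line bundle over S^1 is realised as
  the tautological bundle: the fibre over u = (p,q) is the +1 eigenline of the
  reflection matrix [[p, q], [q, -p]], i.e. the line at half the angle of u.\<close>
definition refl_u :: "real \<times> real \<Rightarrow> real \<times> real \<Rightarrow> real \<times> real" where
  "refl_u u w = (fst u * fst w + snd u * snd w, snd u * fst w - fst u * snd w)"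

definition mobius_bundle :: "((real \<times> real) \<times> (real \<times> real)) set" where
  "mobius_bundle = {(u, w). norm u = 1 \<and> refl_u u w = w}"

text \<open>Total space of L + 1 + 1 over S^1 (Whitney sum: fibre = L_u \<times> R \<times> R),
  with the zero section removed.\<close>
definition L11_minus_zero :: "((real \<times> real) \<times> (real \<times> real) \<times> real \<times> real) set" where
  "L11_minus_zero = {(u, w, s, t). (u, w) \<in> mobius_bundle \<and> (w, s, t) \<noteq> 0}"

end

theory Submission
  imports Defs
begin

text \<open>
  In the coordinates \<open>X = (d, e, f - c)\<close> and \<open>Y = (b, c, d - a)\<close> the entries of the Ricci
  tensor are, up to sign, the components of \<open>X \<times> Y\<close>. So \<open>A\<^sup>0\<close> consists of the nonzero pairs of
  parallel vectors, i.e. of the nonzero \<open>Z = X + i Y \<in> \<complex>\<^sup>3\<close> of the form \<open>Z = \<zeta> w\<close> with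
  \<open>\<zeta> \<in> \<complex>\<close> and \<open>w \<in> \<real>\<^sup>3\<close>.

  Where \<open>k \<bullet> X \<noteq> 0\<close>, \<open>A\<^sup>0\<close> is the graph \<open>Y = (k \<bullet> Y / k \<bullet> X) X\<close>, which a rational change of
  coordinates of \<open>\<real>\<^sup>6\<close> straightens to a linear subspace; where \<open>k \<bullet> Y \<noteq> 0\<close> the roles of \<open>X\<close>
  and \<open>Y\<close> are exchanged.

  For \<open>Z = \<zeta> w\<close> the map \<open>Z \<mapsto> (Z \<bullet> Z / |Z|\<^sup>2, Z\<^sub>3, Z\<^sub>1 + i Z\<^sub>2) = (\<zeta>\<^sup>2 / |\<zeta>|\<^sup>2, \<zeta> w\<^sub>3, \<zeta> (w\<^sub>1 + i w\<^sub>2))\<close>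
  records a point \<open>u\<close> of the circle, a vector of the line through \<open>\<zeta>\<close> (which is the Moebius
  line over \<open>u\<close>) and an unconstrained complex number. Since \<open>u\<close> determines \<open>\<zeta>\<close> up to a real
  factor, \<open>Z\<^sub>1\<close> and \<open>Z\<^sub>2\<close> are recovered rationally, so the map and its inverse are both smooth.
\<close>

section \<open>Smooth maps between Euclidean spaces\<close>

lemma Ck_on_cong:
  assumes "open U" "\<And>x. x \<in> U \<Longrightarrow> f x = g x" "Ck_on k U f"
  shows "Ck_on k U g"
  using assms(2,3)
proof (induction k arbitrary: f g)
  case 0
  then show ?case using continuous_on_cong by auto
next
  case (Suc k)
  have "g differentiable (at x) \<and> frechet_derivative g (at x) = frechet_derivative f (at x)"
    if "x \<in> U" for x
  proof -
    have "(f has_derivative frechet_derivative f (at x)) (at x)"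
      using Suc.prems(2) that frechet_derivative_works by auto
    then have "(g has_derivative frechet_derivative f (at x)) (at x)"
      using has_derivative_transform_within_open assms(1) that Suc.prems(1) by blast
    then show ?thesis using frechet_derivative_at differentiableI by metis
  qed
  then show ?case
    using Suc.prems(2)
      Suc.IH[of "\<lambda>x. frechet_derivative f (at x) _" "\<lambda>x. frechet_derivative g (at x) _"]
    by auto
qed

lemma Ck_on_SucI:
  assumes "open U"
    and "\<And>x. x \<in> U \<Longrightarrow> (f has_derivative f' x) (at x)"
    and "\<And>i. i \<in> Basis \<Longrightarrow> Ck_on k U (\<lambda>x. f' x i)"
  shows "Ck_on (Suc k) U f"
proof -
  have "frechet_derivative f (at x) = f' x" if "x \<in> U" for x
    using assms(2) that frechet_derivative_at by metis
  then show ?thesis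
    using assms by (auto intro: differentiableI Ck_on_cong[OF assms(1) _ assms(3)])
qed

lemma Ck_on_Suc_imp_Ck_on: "Ck_on (Suc k) U f \<Longrightarrow> Ck_on k U f"
proof (induction k arbitrary: f)
  case 0
  then show ?case
    by (auto intro!: continuous_at_imp_continuous_on differentiable_imp_continuous_within)
next
  case (Suc k)
  then show ?case by (metis Ck_on.simps(2))
qed

lemma Ck_on_Suc_has_derivative:
  "Ck_on (Suc k) U f \<Longrightarrow> x \<in> U \<Longrightarrow> (f has_derivative frechet_derivative f (at x)) (at x)"
  by (simp add: frechet_derivative_works)

lemma Ck_on_const: "open U \<Longrightarrow> Ck_on k U (\<lambda>x. c)"
proof (induction k arbitrary: c)
  case 0
  then show ?case by simp
next
  case (Suc k)
  then show ?case by (auto intro!: Ck_on_SucI[where f' = "\<lambda>x h. 0"])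
qed

lemma Ck_on_id: "open U \<Longrightarrow> Ck_on k U (\<lambda>x. x)"
  by (cases k) (auto intro!: Ck_on_SucI[where f' = "\<lambda>x h. h"] Ck_on_const continuous_on_id)

lemma Ck_on_bounded_linear:
  assumes "bounded_linear L" "open U" "Ck_on k U f"
  shows "Ck_on k U (\<lambda>x. L (f x))"
  using assms(3)
proof (induction k arbitrary: f)
  case 0
  then show ?case
    using continuous_on_compose[of U f L] linear_continuous_on[OF assms(1)] by (auto simp: o_def)
next
  case (Suc k)
  show ?case
  proof (rule Ck_on_SucI[OF assms(2)])
    show "((\<lambda>x. L (f x)) has_derivative (\<lambda>h. L (frechet_derivative f (at x) h))) (at x)"
      if "x \<in> U" for x
      using bounded_linear.has_derivative[OF assms(1) Ck_on_Suc_has_derivative[OF Suc.prems that]] .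
    show "Ck_on k U (\<lambda>x. L (frechet_derivative f (at x) i))" if "i \<in> Basis" for i
      using Suc that by simp
  qed
qed

lemma Ck_on_Pair:
  assumes "open U" "Ck_on k U f" "Ck_on k U g"
  shows "Ck_on k U (\<lambda>x. (f x, g x))"
  using assms(2,3)
proof (induction k arbitrary: f g)
  case 0
  then show ?case by (simp add: continuous_on_Pair)
next
  case (Suc k)
  show ?case
  proof (rule Ck_on_SucI[OF assms(1)])
    show "((\<lambda>x. (f x, g x)) has_derivative
        (\<lambda>h. (frechet_derivative f (at x) h, frechet_derivative g (at x) h))) (at x)" if "x \<in> U" for x
      using Suc.prems that by (intro has_derivative_Pair Ck_on_Suc_has_derivative)
    show "Ck_on k U (\<lambda>x. (frechet_derivative f (at x) i, frechet_derivative g (at x) i))"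
      if "i \<in> Basis" for i
      using Suc that by simp
  qed
qed

lemma Ck_on_add:
  assumes "open U" "Ck_on k U f" "Ck_on k U g"
  shows "Ck_on k U (\<lambda>x. f x + g x)"
  using Ck_on_bounded_linear[OF bounded_linear_add[OF bounded_linear_fst bounded_linear_snd]
      assms(1) Ck_on_Pair[OF assms]]
  by simp

lemma Ck_on_bilinear:
  assumes "bounded_bilinear B" "open U" "Ck_on k U f" "Ck_on k U g"
  shows "Ck_on k U (\<lambda>x. B (f x) (g x))"
  using assms(3,4)
proof (induction k arbitrary: f g)
  case 0
  then show ?case
    using bounded_bilinear.continuous_on[OF assms(1)] by simp
next
  case (Suc k)
  let ?Df = "\<lambda>x. frechet_derivative f (at x)" and ?Dg = "\<lambda>x. frechet_derivative g (at x)"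
  show ?case
  proof (rule Ck_on_SucI[OF assms(2)])
    show "((\<lambda>x. B (f x) (g x)) has_derivative (\<lambda>h. B (f x) (?Dg x h) + B (?Df x h) (g x))) (at x)"
      if "x \<in> U" for x
      using Suc.prems that by (intro bounded_bilinear.FDERIV[OF assms(1)] Ck_on_Suc_has_derivative)
    show "Ck_on k U (\<lambda>x. B (f x) (?Dg x i) + B (?Df x i) (g x))" if "i \<in> Basis" for i
    proof (rule Ck_on_add[OF assms(2)])
      show "Ck_on k U (\<lambda>x. B (f x) (?Dg x i))"
        using Suc.IH Ck_on_Suc_imp_Ck_on[OF Suc.prems(1)] Suc.prems(2) that by simp
      show "Ck_on k U (\<lambda>x. B (?Df x i) (g x))"
        using Suc.IH Ck_on_Suc_imp_Ck_on[OF Suc.prems(2)] Suc.prems(1) that by simp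
    qed
  qed
qed

lemma Ck_on_inverse:
  fixes f :: "'a::euclidean_space \<Rightarrow> 'b::{euclidean_space, real_normed_div_algebra}"
  assumes "open U" "Ck_on k U f" "\<And>x. x \<in> U \<Longrightarrow> f x \<noteq> 0"
  shows "Ck_on k U (\<lambda>x. inverse (f x))"
  using assms(2)
proof (induction k)
  case 0
  then show ?case using assms(3) by (auto intro!: continuous_on_inverse)
next
  case (Suc k)
  let ?Df = "\<lambda>x. frechet_derivative f (at x)"
  have inv: "Ck_on k U (\<lambda>x. inverse (f x))"
    using Suc Ck_on_Suc_imp_Ck_on by blast
  show ?case
  proof (rule Ck_on_SucI[OF assms(1)])
    show "((\<lambda>x. inverse (f x)) has_derivative
        (\<lambda>h. - (inverse (f x) * ?Df x h * inverse (f x)))) (at x)" if "x \<in> U" for x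
      using Suc.prems that assms(3) by (intro Deriv.has_derivative_inverse Ck_on_Suc_has_derivative)
    show "Ck_on k U (\<lambda>x. - (inverse (f x) * ?Df x i * inverse (f x)))" if "i \<in> Basis" for i
    proof (rule Ck_on_bounded_linear[OF bounded_linear_minus[OF bounded_linear_ident] assms(1)])
      have "Ck_on k U (\<lambda>x. ?Df x i)"
        using Suc.prems that by simp
      then show "Ck_on k U (\<lambda>x. inverse (f x) * ?Df x i * inverse (f x))"
        using inv by (intro Ck_on_bilinear[OF bounded_bilinear_mult assms(1)])
    qed
  qed
qed

lemma smooth_on_const: "open U \<Longrightarrow> smooth_on U (\<lambda>x. c)"
  by (simp add: smooth_on_def Ck_on_const)

lemma smooth_on_id: "open U \<Longrightarrow> smooth_on U (\<lambda>x. x)"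
  by (simp add: smooth_on_def Ck_on_id)

lemma smooth_on_bounded_linear:
  "bounded_linear L \<Longrightarrow> smooth_on U f \<Longrightarrow> smooth_on U (\<lambda>x. L (f x))"
  by (simp add: smooth_on_def Ck_on_bounded_linear)

lemma smooth_on_linear:
  fixes L :: "'a::euclidean_space \<Rightarrow> 'b::euclidean_space"
  shows "linear L \<Longrightarrow> open U \<Longrightarrow> smooth_on U L"
  using smooth_on_bounded_linear[OF _ smooth_on_id] by (simp add: linear_conv_bounded_linear)

lemma smooth_on_Pair: "smooth_on U f \<Longrightarrow> smooth_on U g \<Longrightarrow> smooth_on U (\<lambda>x. (f x, g x))"
  by (simp add: smooth_on_def Ck_on_Pair)

lemma smooth_on_bilinear:
  "bounded_bilinear B \<Longrightarrow> smooth_on U f \<Longrightarrow> smooth_on U g \<Longrightarrow> smooth_on U (\<lambda>x. B (f x) (g x))"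
  by (simp add: smooth_on_def Ck_on_bilinear)

lemma smooth_on_inverse:
  fixes f :: "'a::euclidean_space \<Rightarrow> 'b::{euclidean_space, real_normed_div_algebra}"
  shows "smooth_on U f \<Longrightarrow> (\<And>x. x \<in> U \<Longrightarrow> f x \<noteq> 0) \<Longrightarrow> smooth_on U (\<lambda>x. inverse (f x))"
  by (simp add: smooth_on_def Ck_on_inverse)

lemma smooth_on_cong: "smooth_on U f \<Longrightarrow> (\<And>x. x \<in> U \<Longrightarrow> f x = g x) \<Longrightarrow> smooth_on U g"
  unfolding smooth_on_def by (metis Ck_on_cong)

lemmas smooth_on_fst = smooth_on_bounded_linear[OF bounded_linear_fst]
lemmas smooth_on_snd = smooth_on_bounded_linear[OF bounded_linear_snd]
lemmas smooth_on_minus = smooth_on_bounded_linear[OF bounded_linear_minus[OF bounded_linear_ident]]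
lemmas smooth_on_mult = smooth_on_bilinear[OF bounded_bilinear_mult]
lemmas smooth_on_scaleR = smooth_on_bilinear[OF bounded_bilinear_scaleR]
lemmas smooth_on_inner = smooth_on_bilinear[OF bounded_bilinear_inner]

lemma smooth_on_add: "smooth_on U f \<Longrightarrow> smooth_on U g \<Longrightarrow> smooth_on U (\<lambda>x. f x + g x)"
  using smooth_on_bounded_linear[OF bounded_linear_add[OF bounded_linear_fst bounded_linear_snd]
      smooth_on_Pair]
  by simp

lemma smooth_on_diff: "smooth_on U f \<Longrightarrow> smooth_on U g \<Longrightarrow> smooth_on U (\<lambda>x. f x - g x)"
  using smooth_on_add[OF _ smooth_on_minus] by simp

lemma smooth_on_divide:
  fixes f g :: "'a::euclidean_space \<Rightarrow> 'b::{euclidean_space, real_normed_field}"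
  shows "smooth_on U f \<Longrightarrow> smooth_on U g \<Longrightarrow> (\<And>x. x \<in> U \<Longrightarrow> g x \<noteq> 0) \<Longrightarrow>
    smooth_on U (\<lambda>x. f x / g x)"
  unfolding divide_inverse by (intro smooth_on_mult smooth_on_inverse)

lemma smooth_on_imp_smooth_map_on: "smooth_on U f \<Longrightarrow> S \<subseteq> U \<Longrightarrow> smooth_map_on S f"
  unfolding smooth_map_on_def smooth_on_def by blast

section \<open>Straightening a graph of proportional pairs\<close>

lemma proportional_pairs_chart:
  fixes X Y :: "'v::euclidean_space \<Rightarrow> 'w::euclidean_space" and E :: "'w \<Rightarrow> 'v"
  assumes linear: "linear X" "linear Y" "linear E"
    and X_E: "\<And>z. X (E z) = 0" and Y_E: "\<And>z. Y (E z) = z"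
    and M: "\<And>v. k \<bullet> X v \<noteq> 0 \<Longrightarrow> v \<in> M \<longleftrightarrow> Y v = (k \<bullet> Y v / (k \<bullet> X v)) *\<^sub>R X v"
    and p: "k \<bullet> X p \<noteq> 0"
  shows "\<exists>U V (\<phi>::'v \<Rightarrow> 'v) L. open U \<and> p \<in> U \<and> open V \<and> \<phi> ` U = V \<and> inj_on \<phi> U \<and>
    smooth_on U \<phi> \<and> smooth_on V (inv_into U \<phi>) \<and> subspace L \<and> \<phi> ` (U \<inter> M) = V \<inter> L"
proof -
  (* \<phi> moves Y by \<tau> (e - X) with k \<bullet> e = 1: it keeps X, sends k \<bullet> Y to \<tau>,
     and so carries the graph Y = \<tau> X onto the subspace Y = (k \<bullet> Y) e. *)
  define U where "U = {v. k \<bullet> X v \<noteq> 0}"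
  define \<tau> where "\<tau> v = k \<bullet> Y v / (k \<bullet> X v)" for v
  define e where "e = (1 / (k \<bullet> k)) *\<^sub>R k"
  define \<phi> where "\<phi> v = v + \<tau> v *\<^sub>R E (e - X v)" for v
  define \<psi> where "\<psi> w = w + (k \<bullet> Y w) *\<^sub>R E (X w - e)" for w
  define L where "L = {w. Y w - (k \<bullet> Y w) *\<^sub>R e = 0}"
  have "k \<noteq> 0"
    using p by auto
  then have k_e: "k \<bullet> e = 1"
    by (simp add: e_def)
  have X_\<phi>: "X (\<phi> v) = X v" and Y_\<phi>: "Y (\<phi> v) = Y v + \<tau> v *\<^sub>R (e - X v)" for v
    using linear X_E Y_E by (simp_all add: \<phi>_def linear_add linear_scale)
  have X_\<psi>: "X (\<psi> w) = X w" and Y_\<psi>: "Y (\<psi> w) = Y w + (k \<bullet> Y w) *\<^sub>R (X w - e)" for w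
    using linear X_E Y_E by (simp_all add: \<psi>_def linear_add linear_scale)
  have \<tau>_X: "\<tau> v * (k \<bullet> X v) = k \<bullet> Y v" if "v \<in> U" for v
    using that by (simp add: U_def \<tau>_def)
  have \<phi>_U: "\<phi> v \<in> U \<longleftrightarrow> v \<in> U" and \<psi>_U: "\<psi> v \<in> U \<longleftrightarrow> v \<in> U" for v
    by (simp_all add: U_def X_\<phi> X_\<psi>)
  have k_Y_\<phi>: "k \<bullet> Y (\<phi> v) = \<tau> v" if "v \<in> U" for v
    using \<tau>_X[OF that] by (simp add: Y_\<phi> inner_diff_right k_e algebra_simps)
  have \<tau>_\<psi>: "\<tau> (\<psi> w) = k \<bullet> Y w" if "w \<in> U" for w
    using that by (simp add: \<tau>_def U_def X_\<psi> Y_\<psi> inner_diff_right k_e algebra_simps)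
  have E_cancel: "E (a - b) + E (b - a) = 0" for a b
    using linear_add[OF linear(3), of "a - b" "b - a", symmetric] linear_0[OF linear(3)] by simp
  have \<psi>_\<phi>: "\<psi> (\<phi> v) = v" if "v \<in> U" for v
  proof -
    have "\<psi> (\<phi> v) = \<phi> v + \<tau> v *\<^sub>R E (X v - e)"
      by (simp add: \<psi>_def X_\<phi> k_Y_\<phi>[OF that])
    also have "\<dots> = v"
      using E_cancel[of e "X v"] by (simp add: \<phi>_def add.assoc flip: scaleR_add_right)
    finally show ?thesis .
  qed
  have \<phi>_\<psi>: "\<phi> (\<psi> w) = w" if "w \<in> U" for w
  proof -
    have "\<phi> (\<psi> w) = \<psi> w + (k \<bullet> Y w) *\<^sub>R E (e - X w)"
      by (simp add: \<phi>_def X_\<psi> \<tau>_\<psi>[OF that])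
    also have "\<dots> = w"
      using E_cancel[of "X w" e] by (simp add: \<psi>_def add.assoc flip: scaleR_add_right)
    finally show ?thesis .
  qed
  have "open U"
    unfolding U_def using linear(1)
    by (intro open_Collect_neq continuous_intros)
      (simp_all add: linear_continuous_on linear_conv_bounded_linear)
  have "p \<in> U"
    using p by (simp add: U_def)
  have "\<phi> ` U = U"
    using \<phi>_U \<psi>_U \<phi>_\<psi> by (auto simp: image_iff) metis
  have "inj_on \<phi> U"
    using \<psi>_\<phi> by (metis inj_on_inverseI)
  have X_smooth: "smooth_on U X" and Y_smooth: "smooth_on U Y"
    using \<open>open U\<close> linear by (simp_all add: smooth_on_linear)
  have E_bounded: "bounded_linear E"
    using linear(3) by (simp add: linear_conv_bounded_linear)
  have \<tau>_smooth: "smooth_on U \<tau>"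
    unfolding \<tau>_def
    by (intro smooth_on_divide smooth_on_inner smooth_on_const X_smooth Y_smooth \<open>open U\<close>)
      (simp add: U_def)
  have "smooth_on U \<phi>"
    unfolding \<phi>_def
    by (intro smooth_on_add smooth_on_id smooth_on_scaleR \<tau>_smooth
        smooth_on_bounded_linear[OF E_bounded] smooth_on_diff smooth_on_const X_smooth \<open>open U\<close>)
  have "smooth_on U (inv_into U \<phi>)"
  proof (rule smooth_on_cong)
    show "smooth_on U \<psi>"
      unfolding \<psi>_def
      by (intro smooth_on_add smooth_on_id smooth_on_scaleR smooth_on_inner
          smooth_on_bounded_linear[OF E_bounded] smooth_on_diff smooth_on_const X_smooth Y_smooth
          \<open>open U\<close>)
    show "\<psi> w = inv_into U \<phi> w" if "w \<in> U" for w
      using that \<psi>_U \<phi>_\<psi> \<open>inj_on \<phi> U\<close> by (metis inv_into_f_eq)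
  qed
  have "subspace L"
    unfolding L_def using linear(2)
    by (intro linear_subspace_kernel linearI)
      (simp_all add: linear_add linear_scale inner_add_right scaleR_add_left algebra_simps)
  have "\<phi> ` (U \<inter> M) = U \<inter> L"
  proof
    show "\<phi> ` (U \<inter> M) \<subseteq> U \<inter> L"
    proof
      fix w
      assume "w \<in> \<phi> ` (U \<inter> M)"
      then obtain v where v: "v \<in> U" "v \<in> M" and w: "w = \<phi> v"
        by auto
      have "Y v = \<tau> v *\<^sub>R X v"
        using M v by (simp add: U_def \<tau>_def)
      then show "w \<in> U \<inter> L"
        using v \<phi>_U by (simp add: w L_def Y_\<phi> k_Y_\<phi> k_e algebra_simps)
    qed
    show "U \<inter> L \<subseteq> \<phi> ` (U \<inter> M)"
    proof
      fix w
      assume w: "w \<in> U \<inter> L"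
      then have "Y (\<psi> w) = \<tau> (\<psi> w) *\<^sub>R X (\<psi> w)"
        by (simp add: L_def Y_\<psi> X_\<psi> \<tau>_\<psi> algebra_simps)
      then have "\<psi> w \<in> U \<inter> M"
        using M w \<psi>_U by (simp add: U_def \<tau>_def)
      then show "w \<in> \<phi> ` (U \<inter> M)"
        using \<phi>_\<psi> w by (metis IntD1 image_eqI)
    qed
  qed
  show ?thesis
    by (intro exI[of _ U] exI[of _ U] exI[of _ \<phi>] exI[of _ L] conjI) fact+
qed

section \<open>Flat Type A models as pairs of parallel vectors\<close>

type_synonym triple = "real \<times> real \<times> real"
type_synonym typeA_params = "real \<times> real \<times> real \<times> real \<times> real \<times> real"

definition xpart :: "typeA_params \<Rightarrow> triple" where
  "xpart = (\<lambda>(a, b, c, d, e, f). (d, e, f - c))"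

definition ypart :: "typeA_params \<Rightarrow> triple" where
  "ypart = (\<lambda>(a, b, c, d, e, f). (b, c, d - a))"

definition of_parts :: "triple \<Rightarrow> triple \<Rightarrow> typeA_params" where
  "of_parts = (\<lambda>(x1, x2, x3) (y1, y2, y3). (x1 - y3, y1, y2, x1, x2, x3 + y2))"

definition cross :: "triple \<Rightarrow> triple \<Rightarrow> triple" where
  "cross = (\<lambda>(x1, x2, x3) (y1, y2, y3). (x2 * y3 - x3 * y2, x3 * y1 - x1 * y3, x1 * y2 - x2 * y1))"

lemma xpart_of_parts [simp]: "xpart (of_parts x y) = x"
  and ypart_of_parts [simp]: "ypart (of_parts x y) = y"
  by (auto simp: xpart_def ypart_def of_parts_def split: prod.splits)

lemma of_parts_parts [simp]: "of_parts (xpart v) (ypart v) = v"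
  by (auto simp: xpart_def ypart_def of_parts_def split: prod.splits)

lemma linear_xpart: "linear xpart"
  and linear_ypart: "linear ypart"
  by (auto intro!: linearI simp: xpart_def ypart_def algebra_simps split: prod.splits)

lemma linear_of_parts: "linear (\<lambda>(x, y). of_parts x y)"
  and linear_of_parts_left: "linear (\<lambda>x. of_parts x 0)"
  and linear_of_parts_right: "linear (of_parts 0)"
  by (auto intro!: linearI simp: of_parts_def zero_prod_def algebra_simps split: prod.splits)

lemma parts_eq_0_iff: "xpart v = 0 \<and> ypart v = 0 \<longleftrightarrow> v = 0"
  by (metis of_parts_parts linear_0 linear_xpart linear_ypart)

lemma ricci_eq_cross:
  "cross (xpart (a, b, c, d, e, f)) (ypart (a, b, c, d, e, f)) =
    (- ricci22 a b c d e f, ricci11 a b c d e f, ricci12 a b c d e f)"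
  by (simp add: cross_def xpart_def ypart_def ricci11_def ricci12_def ricci22_def algebra_simps)

lemma A0_eq: "A0 = {v. v \<noteq> 0 \<and> cross (xpart v) (ypart v) = 0}"
  by (auto simp: A0_def typeA_flat_def ricci_eq_cross zero_prod_def)

lemma cross_skew: "cross y x = - cross x y"
  by (auto simp: cross_def split: prod.splits)

lemma cross_scaleR_self: "cross x (c *\<^sub>R x) = 0"
  by (auto simp: cross_def zero_prod_def split: prod.splits)

lemma cross_eq_0_iff_proportional:
  assumes "k \<bullet> x \<noteq> 0"
  shows "cross x y = 0 \<longleftrightarrow> y = (k \<bullet> y / (k \<bullet> x)) *\<^sub>R x"
proof
  assume "cross x y = 0"
  obtain k1 k2 k3 x1 x2 x3 y1 y2 y3
    where k: "k = (k1, k2, k3)" and x: "x = (x1, x2, x3)" and y: "y = (y1, y2, y3)"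
    by (metis prod.exhaust)
  with \<open>cross x y = 0\<close> have "x2 * y3 = x3 * y2" "x3 * y1 = x1 * y3" "x1 * y2 = x2 * y1"
    by (simp_all add: cross_def zero_prod_def)
  then have "(k \<bullet> y) *\<^sub>R x = (k \<bullet> x) *\<^sub>R y"
    unfolding k x y by simp (intro conjI; algebra)
  then have "(k \<bullet> y / (k \<bullet> x)) *\<^sub>R x = inverse (k \<bullet> x) *\<^sub>R ((k \<bullet> x) *\<^sub>R y)"
    by (metis scaleR_scaleR divide_inverse_commute)
  then show "y = (k \<bullet> y / (k \<bullet> x)) *\<^sub>R x"
    using assms by simp
qed (metis cross_scaleR_self)

lemma A0_iff_ypart_proportional:
  assumes "k \<bullet> xpart v \<noteq> 0"
  shows "v \<in> A0 \<longleftrightarrow> ypart v = (k \<bullet> ypart v / (k \<bullet> xpart v)) *\<^sub>R xpart v"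
  using assms cross_eq_0_iff_proportional[OF assms] parts_eq_0_iff[of v] by (auto simp: A0_eq)

lemma A0_iff_xpart_proportional:
  assumes "k \<bullet> ypart v \<noteq> 0"
  shows "v \<in> A0 \<longleftrightarrow> xpart v = (k \<bullet> xpart v / (k \<bullet> ypart v)) *\<^sub>R ypart v"
  using assms cross_eq_0_iff_proportional[OF assms] parts_eq_0_iff[of v] cross_skew[of "xpart v"]
  by (auto simp: A0_eq)

lemma smooth_submanifold_A0: "smooth_submanifold A0"
  unfolding smooth_submanifold_def
proof
  fix p
  assume "p \<in> A0"
  then consider "xpart p \<bullet> xpart p \<noteq> 0" | "ypart p \<bullet> ypart p \<noteq> 0"
    using parts_eq_0_iff[of p] by (auto simp: A0_eq)
  then show "\<exists>U V (\<phi>::typeA_params \<Rightarrow> typeA_params) L. open U \<and> p \<in> U \<and> open V \<and>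
      \<phi> ` U = V \<and> inj_on \<phi> U \<and> smooth_on U \<phi> \<and> smooth_on V (inv_into U \<phi>) \<and> subspace L \<and>
      \<phi> ` (U \<inter> A0) = V \<inter> L"
  proof cases
    case 1
    show ?thesis
      using proportional_pairs_chart[OF linear_xpart linear_ypart linear_of_parts_right
            _ _ A0_iff_ypart_proportional 1] by simp
  next
    case 2
    show ?thesis
      using proportional_pairs_chart[OF linear_ypart linear_xpart linear_of_parts_left
            _ _ A0_iff_xpart_proportional 2] by simp
  qed
qed

section \<open>The diffeomorphism onto L \<oplus> 1 \<oplus> 1\<close>

type_synonym bundle_point = "(real \<times> real) \<times> (real \<times> real) \<times> real \<times> real"

(* With Z = x + i y: the circle point Z \<bullet> Z / |Z|\<^sup>2, the fibre vector Z\<^sub>3 and Z\<^sub>1 + i Z\<^sub>2. *)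
definition bundle_coords :: "triple \<Rightarrow> triple \<Rightarrow> bundle_point" where
  "bundle_coords x y = (case (x, y) of ((x1, x2, x3), (y1, y2, y3)) \<Rightarrow>
     (((x \<bullet> x - y \<bullet> y) / (x \<bullet> x + y \<bullet> y), 2 * (x \<bullet> y) / (x \<bullet> x + y \<bullet> y)),
      (x3, y3), x1 - y2, y1 + x2))"

(* With u = p + i q and \<sigma> = s + i t: Z\<^sub>1 = (\<sigma> + u cnj \<sigma>) / 2, Z\<^sub>2 = (\<sigma> - u cnj \<sigma>) / (2 i),
   Z\<^sub>3 = w\<^sub>1 + i w\<^sub>2. *)
definition parts_of_bundle :: "bundle_point \<Rightarrow> triple \<times> triple" where
  "parts_of_bundle = (\<lambda>((p, q), (w1, w2), s, t).
     (((s * (1 + p) + t * q) / 2, (t * (1 + p) - s * q) / 2, w1),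
      ((s * q + t * (1 - p)) / 2, (t * q - s * (1 - p)) / 2, w2)))"

lemma mem_L11_minus_zero_iff:
  "((p, q), (w1, w2), s, t) \<in> L11_minus_zero \<longleftrightarrow>
    p\<^sup>2 + q\<^sup>2 = 1 \<and> p * w1 + q * w2 = w1 \<and> q * w1 - p * w2 = w2 \<and> ((w1, w2), s, t) \<noteq> 0"
  by (auto simp: L11_minus_zero_def mobius_bundle_def refl_u_def norm_Pair)

lemma inner_pair_self_neq_0: "(x, y) \<noteq> 0 \<Longrightarrow> x \<bullet> x + y \<bullet> y \<noteq> (0::real)"
  using inner_eq_zero_iff[of "(x, y)"] by simp

lemma
  assumes "cross x y = 0" "(x, y) \<noteq> 0"
  shows bundle_coords_mem: "bundle_coords x y \<in> L11_minus_zero"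
    and parts_of_bundle_coords: "parts_of_bundle (bundle_coords x y) = (x, y)"
proof -
  obtain x1 x2 x3 y1 y2 y3 where x: "x = (x1, x2, x3)" and y: "y = (y1, y2, y3)"
    by (metis prod.exhaust)
  have c: "x2 * y3 = x3 * y2" "x3 * y1 = x1 * y3" "x1 * y2 = x2 * y1"
    using assms(1) by (simp_all add: x y cross_def zero_prod_def)
  define n where "n = x1\<^sup>2 + x2\<^sup>2 + x3\<^sup>2 + y1\<^sup>2 + y2\<^sup>2 + y3\<^sup>2"
  define u1 where "u1 = x1\<^sup>2 + x2\<^sup>2 + x3\<^sup>2 - y1\<^sup>2 - y2\<^sup>2 - y3\<^sup>2"
  define u2 where "u2 = 2 * (x1 * y1 + x2 * y2 + x3 * y3)"
  have coords: "bundle_coords x y = ((u1 / n, u2 / n), (x3, y3), x1 - y2, y1 + x2)"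
    by (simp add: bundle_coords_def x y n_def u1_def u2_def power2_eq_square algebra_simps)
  have "n \<noteq> 0"
    using inner_pair_self_neq_0[OF assms(2)] by (simp add: n_def x y power2_eq_square algebra_simps)
  have "u1\<^sup>2 + u2\<^sup>2 = n\<^sup>2"
    unfolding n_def u1_def u2_def using c by algebra
  with \<open>n \<noteq> 0\<close> have "(u1 / n)\<^sup>2 + (u2 / n)\<^sup>2 = 1"
    by (simp add: field_simps)
  moreover have "u1 * x3 + u2 * y3 = n * x3"
    unfolding n_def u1_def u2_def using c by algebra
  with \<open>n \<noteq> 0\<close> have "u1 / n * x3 + u2 / n * y3 = x3"
    by (simp add: field_simps)
  moreover have "u2 * x3 - u1 * y3 = n * y3"
    unfolding n_def u1_def u2_def using c by algebra
  with \<open>n \<noteq> 0\<close> have "u2 / n * x3 - u1 / n * y3 = y3"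
    by (simp add: field_simps)
  moreover have "((x3, y3), x1 - y2, y1 + x2) \<noteq> 0"
  proof
    assume "((x3, y3), x1 - y2, y1 + x2) = 0"
    then have "x3 = 0" "y3 = 0" "y2 = x1" "y1 = - x2"
      by (auto simp: zero_prod_def)
    moreover from this c(3) have "x1\<^sup>2 + x2\<^sup>2 = 0"
      by (simp add: power2_eq_square)
    ultimately show False
      using assms(2) by (simp add: x y zero_prod_def)
  qed
  ultimately show "bundle_coords x y \<in> L11_minus_zero"
    by (simp add: coords mem_L11_minus_zero_iff)
  show "parts_of_bundle (bundle_coords x y) = (x, y)"
    using \<open>n \<noteq> 0\<close> c unfolding coords
    by (simp add: parts_of_bundle_def x y field_simps, unfold n_def u1_def u2_def,
        intro conjI; algebra)
qed

lemma
  assumes "z \<in> L11_minus_zero" "parts_of_bundle z = (x, y)"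
  shows cross_parts_of_bundle: "cross x y = 0"
    and parts_of_bundle_neq_0: "(x, y) \<noteq> 0"
    and bundle_coords_parts_of_bundle: "bundle_coords x y = z"
proof -
  obtain p q w1 w2 s t where z: "z = ((p, q), (w1, w2), s, t)"
    by (metis prod.exhaust)
  have u: "p\<^sup>2 + q\<^sup>2 = 1" and w: "p * w1 + q * w2 = w1" "q * w1 - p * w2 = w2"
    and nonzero: "((w1, w2), s, t) \<noteq> 0"
    using assms(1) by (simp_all add: z mem_L11_minus_zero_iff)
  have x: "x = ((s * (1 + p) + t * q) / 2, (t * (1 + p) - s * q) / 2, w1)"
    and y: "y = ((s * q + t * (1 - p)) / 2, (t * q - s * (1 - p)) / 2, w2)"
    using assms(2) by (simp_all add: z parts_of_bundle_def)
  have st: "fst x - fst (snd y) = s" "fst y + fst (snd x) = t"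
    by (simp_all add: x y field_simps)
  show "cross x y = 0"
    unfolding x y cross_def zero_prod_def using u w
    by (simp add: field_simps, intro conjI; algebra)
  show "(x, y) \<noteq> 0"
    using nonzero st by (auto simp: x y zero_prod_def)
  define n where "n = s\<^sup>2 + t\<^sup>2 + w1\<^sup>2 + w2\<^sup>2"
  have "n \<noteq> 0"
    using nonzero by (auto simp: n_def zero_prod_def add_nonneg_eq_0_iff)
  have "x \<bullet> x + y \<bullet> y = n" "x \<bullet> x - y \<bullet> y = p * n" "2 * (x \<bullet> y) = q * n"
    unfolding x y n_def using u w by (simp_all add: field_simps power2_eq_square; algebra)+
  then show "bundle_coords x y = z"
    using \<open>n \<noteq> 0\<close> st by (simp add: bundle_coords_def z x y)
qed

lemma smooth_on_bundle_coords: "smooth_on (- {0}) (\<lambda>v. bundle_coords (xpart v) (ypart v))"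
proof -
  have "open (- {0 :: typeA_params})"
    by (simp add: open_Compl)
  moreover have "smooth_on (- {0}) xpart" "smooth_on (- {0}) ypart"
    using calculation by (simp_all add: smooth_on_linear linear_xpart linear_ypart)
  moreover have "xpart v \<bullet> xpart v + ypart v \<bullet> ypart v \<noteq> 0" if "v \<in> - {0}" for v
    using that inner_pair_self_neq_0[of "xpart v" "ypart v"] parts_eq_0_iff[of v]
    by (auto simp: zero_prod_def)
  ultimately show ?thesis
    unfolding bundle_coords_def prod.case case_prod_beta
    by (intro smooth_on_Pair smooth_on_divide smooth_on_diff smooth_on_add smooth_on_mult
        smooth_on_inner smooth_on_fst smooth_on_snd smooth_on_const) auto
qed

lemma smooth_on_of_parts_of_bundle:
  "smooth_on UNIV (\<lambda>z. case parts_of_bundle z of (x, y) \<Rightarrow> of_parts x y)"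
proof (rule smooth_on_bounded_linear[where f = parts_of_bundle])
  show "bounded_linear (\<lambda>(x, y). of_parts x y)"
    using linear_of_parts by (simp add: linear_conv_bounded_linear)
  show "smooth_on UNIV parts_of_bundle"
    unfolding parts_of_bundle_def case_prod_beta
    by (intro smooth_on_Pair smooth_on_divide smooth_on_diff smooth_on_add smooth_on_mult
        smooth_on_fst smooth_on_snd smooth_on_const smooth_on_id open_UNIV) auto
qed

lemma diffeomorphic_A0_L11_minus_zero: "diffeomorphic_sets A0 L11_minus_zero"
proof -
  define F where "F = (\<lambda>v. bundle_coords (xpart v) (ypart v))"
  define G where "G = (\<lambda>z. case parts_of_bundle z of (x, y) \<Rightarrow> of_parts x y)"
  have F_mem: "F v \<in> L11_minus_zero" and G_F: "G (F v) = v" if "v \<in> A0" for v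
  proof -
    have "cross (xpart v) (ypart v) = 0" "(xpart v, ypart v) \<noteq> 0"
      using that parts_eq_0_iff[of v] by (auto simp: A0_eq zero_prod_def)
    then show "F v \<in> L11_minus_zero" "G (F v) = v"
      by (simp_all add: F_def G_def bundle_coords_mem parts_of_bundle_coords)
  qed
  have G_mem: "G z \<in> A0" and F_G: "F (G z) = z" if "z \<in> L11_minus_zero" for z
  proof -
    obtain x y where xy: "parts_of_bundle z = (x, y)"
      by (cases "parts_of_bundle z")
    show "G z \<in> A0" "F (G z) = z"
      using cross_parts_of_bundle[OF that xy] parts_of_bundle_neq_0[OF that xy]
        bundle_coords_parts_of_bundle[OF that xy] parts_eq_0_iff[of "of_parts x y"]
      by (auto simp: F_def G_def xy A0_eq zero_prod_def)
  qed
  have "smooth_map_on A0 F"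
    unfolding F_def
    by (rule smooth_on_imp_smooth_map_on[OF smooth_on_bundle_coords]) (auto simp: A0_eq)
  moreover have "smooth_map_on L11_minus_zero G"
    unfolding G_def by (rule smooth_on_imp_smooth_map_on[OF smooth_on_of_parts_of_bundle]) simp
  ultimately show ?thesis
    unfolding diffeomorphic_sets_def using F_mem G_mem G_F F_G by blast
qed

theorem theorem1p1:
  shows "A0 \<subseteq> - {0} \<and> smooth_submanifold A0 \<and> diffeomorphic_sets A0 L11_minus_zero"
proof (intro conjI)
  show "A0 \<subseteq> - {0}"
    by (auto simp: A0_def)
  show "smooth_submanifold A0"
    by (rule smooth_submanifold_A0)
  show "diffeomorphic_sets A0 L11_minus_zero"
    by (rule diffeomorphic_A0_L11_minus_zero)
qed

end
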